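(* Let $\Gamma=\langle V,(w_u)_{u\in V},\alpha,1\rangle$ be a celebrity game with critical distance $\beta=1$, and let $G=(V,E)$ be the outcome graph of a strategy profile of minimum social cost. Then for any distinct $u,v\in V$: if $w_u+w_v<\alpha$ then $\{u,v\}\notin E$, and if $w_u+w_v>\alpha$ then $\{u,v\}\in E$.
   Context: A celebrity game $\Gamma=\langle V,(w_u)_{u\in V},\alpha,\beta\rangle$ consists of a set of players $V=\{1,\dots,n\}$, celebrity weights $w_u>0$, a link cost $\alpha>0$ and a critical distance $\beta$ with $1\le\beta\le n-1$. A strategy of player $u$ is a set $S_u\subseteq V\setminus\{u\}$; a strategy profile is $S=(S_1,\dots,S_n)$; its outcome graph $G[S]$ is the undirected graph on $V$ with edge set $\{\{u,v\}: u\in S_v\text{ or }v\in S_u\}$. With $d_G$ the graph distance (infinite between different connected components), the cost of player $u$ is $c_u(S)=\alpha|S_u|+\sum_{v:\,d_{G[S]}(u,v)>\beta}w_v$ and the social cost is $C(S)=\sum_{u\in V}c_u(S)$. *)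

theory Defs
  imports Main "HOL-Library.Extended_Nat"
begin

definition players :: "nat \<Rightarrow> nat set" where
  "players n = {1..n}"

definition valid_profile :: "nat \<Rightarrow> (nat \<Rightarrow> nat set) \<Rightarrow> bool" where
  "valid_profile n S \<longleftrightarrow> (\<forall>u\<in>players n. S u \<subseteq> players n - {u})"

definition outcome_edge :: "(nat \<Rightarrow> nat set) \<Rightarrow> nat \<Rightarrow> nat \<Rightarrow> bool" where
  "outcome_edge S u v \<longleftrightarrow> u \<in> S v \<or> v \<in> S u"

definition is_walk :: "nat \<Rightarrow> (nat \<Rightarrow> nat set) \<Rightarrow> nat list \<Rightarrow> bool" where
  "is_walk n S xs \<longleftrightarrow> xs \<noteq> [] \<and> set xs \<subseteq> players n \<and>
     (\<forall>i. Suc i < length xs \<longrightarrow> outcome_edge S (xs ! i) (xs ! Suc i))"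

text \<open>Graph distance in G[S] (infinite if no walk exists).\<close>
definition gdist :: "nat \<Rightarrow> (nat \<Rightarrow> nat set) \<Rightarrow> nat \<Rightarrow> nat \<Rightarrow> enat" where
  "gdist n S u v = (INF xs \<in> {xs. is_walk n S xs \<and> hd xs = u \<and> last xs = v}.
                      enat (length xs - 1))"

definition player_cost :: "nat \<Rightarrow> (nat \<Rightarrow> real) \<Rightarrow> real \<Rightarrow> nat \<Rightarrow> (nat \<Rightarrow> nat set) \<Rightarrow> nat \<Rightarrow> real" where
  "player_cost n w \<alpha> \<beta> S u =
     \<alpha> * real (card (S u)) + (\<Sum>v\<in>{v\<in>players n. gdist n S u v > enat \<beta>}. w v)"

definition social_cost :: "nat \<Rightarrow> (nat \<Rightarrow> real) \<Rightarrow> real \<Rightarrow> nat \<Rightarrow> (nat \<Rightarrow> nat set) \<Rightarrow> real" where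
  "social_cost n w \<alpha> \<beta> S = (\<Sum>u\<in>players n. player_cost n w \<alpha> \<beta> S u)"

definition celebrity_game :: "nat \<Rightarrow> (nat \<Rightarrow> real) \<Rightarrow> real \<Rightarrow> nat \<Rightarrow> bool" where
  "celebrity_game n w \<alpha> \<beta> \<longleftrightarrow> (\<forall>u\<in>players n. w u > 0) \<and> \<alpha> > 0 \<and> 1 \<le> \<beta> \<and> \<beta> \<le> n - 1"

definition social_optimum :: "nat \<Rightarrow> (nat \<Rightarrow> real) \<Rightarrow> real \<Rightarrow> nat \<Rightarrow> (nat \<Rightarrow> nat set) \<Rightarrow> bool" where
  "social_optimum n w \<alpha> \<beta> S \<longleftrightarrow> valid_profile n S \<and>
     (\<forall>S'. valid_profile n S' \<longrightarrow> social_cost n w \<alpha> \<beta> S \<le> social_cost n w \<alpha> \<beta> S')"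

end

theory Submission
  imports Defs
begin

text \<open>With critical distance 1, player x pays w y exactly for the players y that are not
  adjacent to x, so the social cost is \<alpha> times the number of bought links plus the weight
  of all ordered non-adjacent pairs. Adding or deleting the single edge {u, v} changes the second
  term by w u + w v and the first by at least \<alpha> (when deleting) or exactly \<alpha> (when adding a
  link bought by u); an optimum therefore cannot gain from either change.\<close>

lemma short_walk_iff_adjacent:
  assumes "x \<in> players n" "y \<in> players n"
  shows "(\<exists>xs. is_walk n S xs \<and> hd xs = x \<and> last xs = y \<and> length xs \<le> 2) \<longleftrightarrow>
         x = y \<or> outcome_edge S x y"
proof
  assume "\<exists>xs. is_walk n S xs \<and> hd xs = x \<and> last xs = y \<and> length xs \<le> 2"
  then obtain xs where walk: "is_walk n S xs" "hd xs = x" "last xs = y" and "length xs \<le> 2"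
    by blast
  then consider a where "xs = [a]" | a b where "xs = [a, b]"
    by (auto simp: is_walk_def le_Suc_eq length_Suc_conv numeral_2_eq_2)
  then show "x = y \<or> outcome_edge S x y"
    by cases (use walk in \<open>auto simp: is_walk_def\<close>)
next
  assume "x = y \<or> outcome_edge S x y"
  then have "is_walk n S (if x = y then [x] else [x, y])"
    using assms by (auto simp: is_walk_def less_Suc_eq nth_Cons')
  then show "\<exists>xs. is_walk n S xs \<and> hd xs = x \<and> last xs = y \<and> length xs \<le> 2"
    by (intro exI[of _ "if x = y then [x] else [x, y]"]) auto
qed

lemma gdist_gt_one_iff:
  assumes "x \<in> players n" "y \<in> players n"
  shows "gdist n S x y > enat 1 \<longleftrightarrow> x \<noteq> y \<and> \<not> outcome_edge S x y"
proof -
  have "gdist n S x y > enat 1 \<longleftrightarrow> \<not> gdist n S x y < enat 2"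
    using Suc_ile_eq[of 1 "gdist n S x y"] by (simp add: not_less numeral_2_eq_2)
  also have "\<dots> \<longleftrightarrow> \<not> (\<exists>xs. is_walk n S xs \<and> hd xs = x \<and> last xs = y \<and> length xs \<le> 2)"
    unfolding gdist_def INF_less_iff by auto
  finally show ?thesis
    using short_walk_iff_adjacent[OF assms] by blast
qed

definition link_count :: "nat \<Rightarrow> (nat \<Rightarrow> nat set) \<Rightarrow> nat" where
  "link_count n S = (\<Sum>x\<in>players n. card (S x))"

definition separated_pairs :: "nat \<Rightarrow> (nat \<Rightarrow> nat set) \<Rightarrow> (nat \<times> nat) set" where
  "separated_pairs n S =
     {(x, y) \<in> players n \<times> players n. x \<noteq> y \<and> \<not> outcome_edge S x y}"

lemma social_cost_critical_distance_one:
  "social_cost n w \<alpha> 1 S = \<alpha> * real (link_count n S) + (\<Sum>(x, y)\<in>separated_pairs n S. w y)"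
proof -
  have "separated_pairs n S = Sigma (players n) (\<lambda>x. {y \<in> players n. gdist n S x y > enat 1})"
    unfolding separated_pairs_def using gdist_gt_one_iff by fastforce
  then have "(\<Sum>(x, y)\<in>separated_pairs n S. w y) =
             (\<Sum>x\<in>players n. \<Sum>y\<in>{y \<in> players n. gdist n S x y > enat 1}. w y)"
    by (simp add: sum.Sigma players_def)
  then show ?thesis
    by (simp add: social_cost_def player_cost_def link_count_def sum.distrib sum_distrib_left
        one_enat_def)
qed

lemma finite_separated_pairs: "finite (separated_pairs n S)"
  by (rule finite_subset[of _ "players n \<times> players n"]) (auto simp: separated_pairs_def players_def)

lemma social_cost_edge_toggle:
  assumes "u \<in> players n" "v \<in> players n" "u \<noteq> v" "\<not> outcome_edge S u v"
    and "\<And>x y. outcome_edge S' x y \<longleftrightarrow> outcome_edge S x y \<or> {x, y} = {u, v}"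
  shows "social_cost n w \<alpha> 1 S =
         social_cost n w \<alpha> 1 S' + \<alpha> * (real (link_count n S) - real (link_count n S')) + w u + w v"
proof -
  have "separated_pairs n S = insert (u, v) (insert (v, u) (separated_pairs n S'))"
    and "(u, v) \<notin> separated_pairs n S'" "(v, u) \<notin> separated_pairs n S'"
    using assms by (auto simp: separated_pairs_def outcome_edge_def doubleton_eq_iff)
  then have "(\<Sum>(x, y)\<in>separated_pairs n S. w y) = w v + w u + (\<Sum>(x, y)\<in>separated_pairs n S'. w y)"
    using \<open>u \<noteq> v\<close> by (simp add: finite_separated_pairs)
  then show ?thesis
    by (simp only: social_cost_critical_distance_one) (simp add: algebra_simps)
qed

lemma valid_profile_finite_strategy:
  "valid_profile n S \<Longrightarrow> u \<in> players n \<Longrightarrow> finite (S u)"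
  unfolding valid_profile_def players_def by (meson finite_Diff finite_atLeastAtMost finite_subset)

lemma link_count_add_link:
  assumes "u \<in> players n" "finite (S u)" "v \<notin> S u"
  shows "link_count n (S(u := insert v (S u))) = Suc (link_count n S)"
proof -
  have "finite (players n)"
    by (simp add: players_def)
  then show ?thesis
    using assms by (simp add: link_count_def sum.remove[of "players n" u])
qed

lemma link_count_strict_mono:
  assumes "\<And>x. x \<in> players n \<Longrightarrow> S' x \<subseteq> S x" "\<And>x. x \<in> players n \<Longrightarrow> finite (S x)"
    and "\<exists>u\<in>players n. S' u \<noteq> S u"
  shows "link_count n S' < link_count n S"
  unfolding link_count_def
proof (rule sum_strict_mono_ex1)
  show "\<exists>x\<in>players n. card (S' x) < card (S x)"
    using assms by (metis psubsetI psubset_card_mono)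
qed (use assms in \<open>auto simp: players_def card_mono\<close>)

lemma social_optimum_excludes_cheap_edge:
  assumes opt: "social_optimum n w \<alpha> 1 S" and "0 \<le> \<alpha>"
    and uv: "u \<in> players n" "v \<in> players n" "u \<noteq> v" and cheap: "w u + w v < \<alpha>"
  shows "\<not> outcome_edge S u v"
proof
  assume edge: "outcome_edge S u v"
  define S' where "S' = S(u := S u - {v}, v := S v - {u})"
  have valid: "valid_profile n S"
    using opt by (simp add: social_optimum_def)
  then have "valid_profile n S'"
    using uv by (auto simp: valid_profile_def S'_def)
  then have "social_cost n w \<alpha> 1 S \<le> social_cost n w \<alpha> 1 S'"
    using opt by (simp add: social_optimum_def)
  moreover have "social_cost n w \<alpha> 1 S' =
      social_cost n w \<alpha> 1 S + \<alpha> * (real (link_count n S') - real (link_count n S)) + w u + w v"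
    using uv edge
    by (intro social_cost_edge_toggle) (auto simp: S'_def outcome_edge_def doubleton_eq_iff)
  moreover have "link_count n S' < link_count n S"
    using edge uv valid_profile_finite_strategy[OF valid]
    by (intro link_count_strict_mono) (auto simp: S'_def outcome_edge_def intro: bexI[of _ v])
  then have "\<alpha> * (real (link_count n S') - real (link_count n S)) \<le> \<alpha> * -1"
    using \<open>0 \<le> \<alpha>\<close> by (intro mult_left_mono) auto
  ultimately show False
    using cheap by linarith
qed

lemma social_optimum_includes_expensive_edge:
  assumes opt: "social_optimum n w \<alpha> 1 S"
    and uv: "u \<in> players n" "v \<in> players n" "u \<noteq> v" and expensive: "w u + w v > \<alpha>"
  shows "outcome_edge S u v"
proof (rule ccontr)
  assume no_edge: "\<not> outcome_edge S u v"
  define S' where "S' = S(u := insert v (S u))"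
  have valid: "valid_profile n S"
    using opt by (simp add: social_optimum_def)
  then have "valid_profile n S'"
    using uv by (auto simp: valid_profile_def S'_def)
  then have "social_cost n w \<alpha> 1 S \<le> social_cost n w \<alpha> 1 S'"
    using opt by (simp add: social_optimum_def)
  moreover have "social_cost n w \<alpha> 1 S =
      social_cost n w \<alpha> 1 S' + \<alpha> * (real (link_count n S) - real (link_count n S')) + w u + w v"
    using uv no_edge
    by (intro social_cost_edge_toggle) (auto simp: S'_def outcome_edge_def doubleton_eq_iff)
  moreover have "link_count n S' = Suc (link_count n S)"
    using no_edge uv valid_profile_finite_strategy[OF valid]
    unfolding S'_def by (intro link_count_add_link) (auto simp: outcome_edge_def)
  ultimately show False
    using expensive by simp
qed

theorem proposition12:
  fixes n :: nat and w :: "nat \<Rightarrow> real" and \<alpha> :: real and S :: "nat \<Rightarrow> nat set"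
  assumes "celebrity_game n w \<alpha> 1"
    and "social_optimum n w \<alpha> 1 S"
    and "u \<in> players n" and "v \<in> players n" and "u \<noteq> v"
  shows "(w u + w v < \<alpha> \<longrightarrow> \<not> outcome_edge S u v) \<and>
         (w u + w v > \<alpha> \<longrightarrow> outcome_edge S u v)"
proof -
  have "0 \<le> \<alpha>"
    using assms(1) by (simp add: celebrity_game_def)
  then show ?thesis
    using assms(2-) social_optimum_excludes_cheap_edge social_optimum_includes_expensive_edge
    by blast
qed

end
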